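(* A vector $v=(v_{i,j})\in E$ belongs to $Q_{\min}^\star$ if and only if $\sum_{(i,j)\in I}v_{i,j}=0$ and $\sum_{(i,j)\in I_s}v_{i,j}\le0$ for every $s\in\{1,\dots,d\}$. A vector $v\in E$ belongs to $Q_{\max}^\star$ if and only if $\sum_{(i,j)\in I}v_{i,j}=0$ and $\sum_{(i,j)\in J}v_{i,j}\le0$ for every admissible subset $J\subset I$.
   Context: Let $d\ge1$, $I=\{(i,j)\in\mathbb{Z}^2:1\le i\le j\le d\}$, $E=\mathbb{R}^I$ with scalar product $\langle v|w\rangle_E=\sum_{(i,j)\in I}v_{i,j}w_{i,j}$. $Q_{\max}\subset E$ is the cone of $q=(q_{i,j})$ with $q_{i,j}\ge q_{i,j+1}$ and $q_{i,j}\le q_{i+1,j+1}$ for all $1\le i\le j<d$; $Q_{\min}\subset E$ is the cone of $q$ with $q_{i,j}\ge q_{i,j+1}$ and $q_{i,j}=q_{i+1,j+1}$ for all $1\le i\le j<d$. For a cone $P\subset E$, $P^\star=\{v\in E:\langle v|x\rangle_E\ge0\ \forall x\in P\}$. A subset $J\subset I$ is admissible if for every $(i,j)\in J$, the pairs $(i,j+1)$ and $(i-1,j-1)$ belong to $J$ whenever they belong to $I$. For $s\in\{1,\dots,d\}$, $I_s=\{(i,j)\in I: j-i\ge d-s\}$. *)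

theory Defs
  imports Complex_Main
begin

definition idx :: "nat \<Rightarrow> (nat \<times> nat) set" where
  "idx d = {(i, j). 1 \<le> i \<and> i \<le> j \<and> j \<le> d}"

text \<open>E = R^I, represented as real functions on pairs vanishing outside I.\<close>
definition vecE :: "nat \<Rightarrow> (nat \<times> nat \<Rightarrow> real) set" where
  "vecE d = {v. \<forall>p. p \<notin> idx d \<longrightarrow> v p = 0}"

definition innerE :: "nat \<Rightarrow> (nat \<times> nat \<Rightarrow> real) \<Rightarrow> (nat \<times> nat \<Rightarrow> real) \<Rightarrow> real" where
  "innerE d v w = (\<Sum>p\<in>idx d. v p * w p)"

definition Qmax :: "nat \<Rightarrow> (nat \<times> nat \<Rightarrow> real) set" where
  "Qmax d = {q \<in> vecE d. \<forall>i j. 1 \<le> i \<and> i \<le> j \<and> j < d \<longrightarrow>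
      q (i, j) \<ge> q (i, j + 1) \<and> q (i, j) \<le> q (i + 1, j + 1)}"

definition Qmin :: "nat \<Rightarrow> (nat \<times> nat \<Rightarrow> real) set" where
  "Qmin d = {q \<in> vecE d. \<forall>i j. 1 \<le> i \<and> i \<le> j \<and> j < d \<longrightarrow>
      q (i, j) \<ge> q (i, j + 1) \<and> q (i, j) = q (i + 1, j + 1)}"

definition dual_cone :: "nat \<Rightarrow> (nat \<times> nat \<Rightarrow> real) set \<Rightarrow> (nat \<times> nat \<Rightarrow> real) set" where
  "dual_cone d P = {v \<in> vecE d. \<forall>x\<in>P. innerE d v x \<ge> 0}"

text \<open>Admissible subsets (indices start at 1, so (i-1,j-1) with i = 1 is never in I).\<close>
definition admissible :: "nat \<Rightarrow> (nat \<times> nat) set \<Rightarrow> bool" where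
  "admissible d J \<longleftrightarrow> J \<subseteq> idx d \<and>
     (\<forall>i j. (i, j) \<in> J \<longrightarrow>
        ((i, j + 1) \<in> idx d \<longrightarrow> (i, j + 1) \<in> J) \<and>
        (i \<ge> 1 \<and> j \<ge> 1 \<and> (i - 1, j - 1) \<in> idx d \<longrightarrow> (i - 1, j - 1) \<in> J))"

definition idx_s :: "nat \<Rightarrow> nat \<Rightarrow> (nat \<times> nat) set" where
  "idx_s d s = {(i, j) \<in> idx d. int j - int i \<ge> int d - int s}"

end

theory Submission
  imports Defs
begin

(* Both halves of the theorem are instances of one duality principle.
   For v with total sum zero, a layer-cake (Abel summation) argument shows
   that <v|q> >= 0 as soon as v has non-positive sum on every sublevel set
   {p. q p < t} of q: lowering the top value of q to the next one changes
   <v|q> by (top gap) * (- sum of v below the top), which is >= 0, and we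
   induct on the number of values of q.  Conversely, the vectors that are
   constant c on I, or -1 on a set J and 0 elsewhere, test exactly the
   conditions "sum v = 0" and "sum over J <= 0".
   So a cone P is described by a family F of subsets once
     (a) the constant vectors and the vectors -1_J (J in F) lie in P, and
     (b) every non-empty sublevel set of every q in P belongs to F.  For Q_min this rests
   on the fact that q(i,j) depends only on j - i and decreases with it;
   the constant vectors of Q_max are taken from Q_min, a subcone of Q_max. *)

section \<open>A layer-cake inequality\<close>

lemma weighted_sum_lower_top:
  fixes v q :: "'a \<Rightarrow> real"
  assumes "finite I" and "\<forall>p\<in>I. q p \<le> m"
  shows "(\<Sum>p\<in>I. v p * q p)
       = (\<Sum>p\<in>I. v p * (if q p = m then m' else q p))
         + (m - m') * (sum v I - sum v {p\<in>I. q p < m})"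
proof -
  have split: "I = {p\<in>I. q p = m} \<union> {p\<in>I. q p < m}"
    using assms(2) by force
  have "sum v I = sum v {p\<in>I. q p = m} + sum v {p\<in>I. q p < m}"
    using assms(1) by (subst split, intro sum.union_disjoint) auto
  moreover have "v p * q p = v p * (if q p = m then m' else q p) + (m - m') * (if q p = m then v p else 0)"
    for p by (simp add: algebra_simps)
  then have "(\<Sum>p\<in>I. v p * q p)
      = (\<Sum>p\<in>I. v p * (if q p = m then m' else q p)) + (m - m') * sum v {p\<in>I. q p = m}"
    using assms(1) by (simp add: sum.distrib sum_distrib_left sum.inter_filter)
  ultimately show ?thesis by simp
qed

lemma weighted_sum_single_value:
  fixes v q :: "'a \<Rightarrow> real"
  assumes fin: "finite I" and "card (q ` I) \<le> 1" and total: "sum v I = 0"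
  shows "(\<Sum>p\<in>I. v p * q p) = 0"
proof -
  have "card (q ` I) \<le> Suc 0" using assms(2) by simp
  then have "\<forall>x\<in>q ` I. \<forall>y\<in>q ` I. x = y"
    using card_le_Suc0_iff_eq[of "q ` I"] fin by blast
  then have "\<forall>p\<in>I. \<forall>p'\<in>I. q p = q p'" by blast
  then obtain c where "\<forall>p\<in>I. q p = c"
    by (cases "I = {}") blast+
  then have "(\<Sum>p\<in>I. v p * q p) = (\<Sum>p\<in>I. c * v p)"
    by (intro sum.cong) simp_all
  also have "\<dots> = c * sum v I"
    by (simp add: sum_distrib_left)
  finally show ?thesis using total by simp
qed

lemma obtain_two_largest:
  fixes T :: "'b::linorder set"
  assumes fin: "finite T" and two: "2 \<le> card T"
  obtains m m' where "m \<in> T" and "m' \<in> T" and "m' < m"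
    and "\<forall>x\<in>T. x \<le> m" and "\<forall>x\<in>T - {m}. x \<le> m'"
proof
  have "T \<noteq> {}" using two by auto
  then show max_in: "Max T \<in> T" using fin by simp
  have "T - {Max T} \<noteq> {}"
  proof
    assume "T - {Max T} = {}"
    then obtain x where "T = {x}" using max_in by blast
    with two show False by simp
  qed
  then have second_in: "Max (T - {Max T}) \<in> T - {Max T}" using fin by (intro Max_in) auto
  then show "Max (T - {Max T}) \<in> T" by simp
  show "\<forall>x\<in>T. x \<le> Max T" and "\<forall>x\<in>T - {Max T}. x \<le> Max (T - {Max T})"
    using fin by simp_all
  then show "Max (T - {Max T}) < Max T" using second_in by fastforce
qed

text \<open>Induction on the number of values of q: a constant q gives c * sum v I = 0,
  otherwise lowering the top value m to the second one m' loses the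
  non-negative amount (m - m') * (- sum v {q < m}).\<close>
lemma weighted_sum_nonneg_of_sublevel_sums:
  fixes v q :: "'a \<Rightarrow> real"
  assumes fin: "finite I" and total: "sum v I = 0"
    and "\<And>t. sum v {p\<in>I. q p < t} \<le> 0"
  shows "0 \<le> (\<Sum>p\<in>I. v p * q p)"
  using assms(3)
proof (induction "card (q ` I)" arbitrary: q rule: less_induct)
  case less
  show ?case
  proof (cases "card (q ` I) \<le> 1")
    case True
    then show ?thesis using weighted_sum_single_value[OF fin _ total] by simp
  next
    case False
    then have "2 \<le> card (q ` I)" by simp
    obtain m m' where "m \<in> q ` I" "m' \<in> q ` I" and gap: "m' < m"
      and top: "\<forall>x\<in>q ` I. x \<le> m" and second: "\<forall>x\<in>q ` I - {m}. x \<le> m'"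
      by (rule obtain_two_largest[OF finite_imageI[OF fin] \<open>2 \<le> card (q ` I)\<close>])
    have below_m: "\<forall>p\<in>I. q p \<le> m" and below_m': "\<forall>p\<in>I. q p \<noteq> m \<longrightarrow> q p \<le> m'"
      using top second by auto
    define q' where "q' = (\<lambda>p. if q p = m then m' else q p)"
    have "q' ` I = q ` I - {m}"
    proof
      show "q' ` I \<subseteq> q ` I - {m}"
        using \<open>m' \<in> q ` I\<close> gap by (auto simp: q'_def)
      show "q ` I - {m} \<subseteq> q' ` I"
        by (auto simp: q'_def intro!: image_eqI)
    qed
    then have "card (q' ` I) < card (q ` I)"
      using card_Diff1_less[OF finite_imageI[OF fin] \<open>m \<in> q ` I\<close>] by simp
    moreover have "sum v {p\<in>I. q' p < t} \<le> 0" for t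
    proof (cases "t \<le> m'")
      case True
      then have "{p\<in>I. q' p < t} = {p\<in>I. q p < t}" using gap by (auto simp: q'_def)
      then show ?thesis using less.prems by simp
    next
      case False
      then have "{p\<in>I. q' p < t} = I" using below_m' gap by (force simp: q'_def)
      then show ?thesis using total by simp
    qed
    ultimately have "0 \<le> (\<Sum>p\<in>I. v p * q' p)" by (rule less.hyps)
    moreover have "(\<Sum>p\<in>I. v p * q p)
        = (\<Sum>p\<in>I. v p * q' p) + (m - m') * (- sum v {p\<in>I. q p < m})"
      using weighted_sum_lower_top[OF fin below_m, of v m'] total by (simp add: q'_def)
    moreover have "0 \<le> (m - m') * (- sum v {p\<in>I. q p < m})"
      using gap less.prems[of m] by (simp add: mult_nonneg_nonpos)
    ultimately show ?thesis by linarith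
  qed
qed

section \<open>Dual cones tested by level vectors\<close>

definition level_vec :: "(nat \<times> nat) set \<Rightarrow> real \<Rightarrow> nat \<times> nat \<Rightarrow> real" where
  "level_vec J c = (\<lambda>p. if p \<in> J then c else 0)"

lemma finite_idx: "finite (idx d)"
proof (rule finite_subset)
  show "idx d \<subseteq> {1..d} \<times> {1..d}" by (auto simp: idx_def)
qed simp

lemma level_vec_in_vecE: "J \<subseteq> idx d \<Longrightarrow> level_vec J c \<in> vecE d"
  by (auto simp: vecE_def level_vec_def)

lemma innerE_level_vec:
  assumes "J \<subseteq> idx d"
  shows "innerE d v (level_vec J c) = c * sum v J"
proof -
  have "innerE d v (level_vec J c) = (\<Sum>p\<in>idx d. if p \<in> J then c * v p else 0)"
    unfolding innerE_def level_vec_def by (intro sum.cong) auto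
  also have "\<dots> = (\<Sum>p\<in>J. c * v p)"
    using assms by (simp add: sum.inter_restrict[OF finite_idx, symmetric] Int_absorb1)
  finally show ?thesis by (simp add: sum_distrib_left)
qed

lemma dual_cone_by_sublevel_sets:
  assumes constants: "\<And>c. level_vec (idx d) c \<in> P"
    and tests: "\<And>J. J \<in> F \<Longrightarrow> J \<subseteq> idx d \<and> level_vec J (-1) \<in> P"
    and sublevel: "\<And>q t. q \<in> P \<Longrightarrow> {p\<in>idx d. q p < t} \<in> insert {} F"
    and v: "v \<in> vecE d"
  shows "v \<in> dual_cone d P \<longleftrightarrow> sum v (idx d) = 0 \<and> (\<forall>J\<in>F. sum v J \<le> 0)"
proof
  assume dual: "v \<in> dual_cone d P"
  then have "0 \<le> innerE d v (level_vec (idx d) c)" for c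
    using constants by (auto simp: dual_cone_def)
  from this[of 1] this[of "-1"] have "sum v (idx d) = 0"
    by (simp add: innerE_level_vec)
  moreover have "sum v J \<le> 0" if "J \<in> F" for J
    using dual tests[OF that] innerE_level_vec[of J d v "-1"] by (auto simp: dual_cone_def)
  ultimately show "sum v (idx d) = 0 \<and> (\<forall>J\<in>F. sum v J \<le> 0)" by blast
next
  assume sums: "sum v (idx d) = 0 \<and> (\<forall>J\<in>F. sum v J \<le> 0)"
  have "0 \<le> innerE d v q" if "q \<in> P" for q
    unfolding innerE_def
  proof (rule weighted_sum_nonneg_of_sublevel_sums[OF finite_idx])
    show "sum v {p\<in>idx d. q p < t} \<le> 0" for t
      using sublevel[OF that, of t] sums by (metis insert_iff sum.empty order_refl)
  qed (use sums in simp)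
  with v show "v \<in> dual_cone d P" by (simp add: dual_cone_def)
qed

section \<open>The cone Q_max and admissible sets\<close>

lemma QmaxD:
  assumes "q \<in> Qmax d" and "1 \<le> i" and "i \<le> j" and "j < d"
  shows "q (i, j + 1) \<le> q (i, j)" and "q (i, j) \<le> q (i + 1, j + 1)"
  using assms unfolding Qmax_def by blast+

text \<open>Every sublevel set of a vector in Q_max is admissible: q decreases
  along rows and increases along diagonals, so being below t propagates to
  (i, j+1) and to (i-1, j-1).\<close>
lemma Qmax_sublevel_admissible:
  assumes q: "q \<in> Qmax d"
  shows "admissible d {p\<in>idx d. q p < t}"
  unfolding admissible_def
proof (intro conjI allI impI)
  fix i j assume ij: "(i, j) \<in> {p\<in>idx d. q p < t}"
  show "(i, j + 1) \<in> {p\<in>idx d. q p < t}" if "(i, j + 1) \<in> idx d"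
  proof -
    have "q (i, j + 1) \<le> q (i, j)" using ij that by (intro QmaxD(1)[OF q]) (auto simp: idx_def)
    with ij that show ?thesis by auto
  qed
  show "(i - 1, j - 1) \<in> {p\<in>idx d. q p < t}"
    if "1 \<le> i \<and> 1 \<le> j \<and> (i - 1, j - 1) \<in> idx d"
  proof -
    define a b where "a = i - 1" and "b = j - 1"
    then have ab: "i = a + 1" "j = b + 1" using that by simp_all
    have "q (a, b) \<le> q (a + 1, b + 1)"
      using that ij ab by (intro QmaxD(2)[OF q]) (auto simp: idx_def)
    with ij that ab show ?thesis by auto
  qed
qed auto

lemma admissible_level_vec_in_Qmax:
  assumes J: "admissible d J"
  shows "level_vec J (-1) \<in> Qmax d"
proof -
  have row: "(i, j + 1) \<in> J" if "(i, j) \<in> J" "j < d" for i j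
    using J that unfolding admissible_def idx_def by auto
  have diag: "(i, j) \<in> J" if "(i + 1, j + 1) \<in> J" "1 \<le> i" "i \<le> j" "j < d" for i j
  proof -
    have "(i + 1 - 1, j + 1 - 1) \<in> idx d" using that by (simp add: idx_def)
    moreover have "1 \<le> i + 1" "1 \<le> j + 1" by simp_all
    ultimately have "(i + 1 - 1, j + 1 - 1) \<in> J" using J that(1) unfolding admissible_def by blast
    then show ?thesis by simp
  qed
  have "level_vec J (-1) (i, j + 1) \<le> level_vec J (-1) (i, j)
      \<and> level_vec J (-1) (i, j) \<le> level_vec J (-1) (i + 1, j + 1)"
    if "1 \<le> i" "i \<le> j" "j < d" for i j
    using row[of i j] diag[of i j] that by (simp add: level_vec_def)
  moreover have "J \<subseteq> idx d" using J by (simp add: admissible_def)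
  ultimately show ?thesis by (simp add: Qmax_def level_vec_in_vecE)
qed

lemma Qmin_subset_Qmax: "Qmin d \<subseteq> Qmax d"
  by (auto simp: Qmin_def Qmax_def)

section \<open>The cone Q_min and the sets I_s\<close>

lemma idx_s_eq_gap:
  assumes "s \<le> d"
  shows "idx_s d s = {(i, j)\<in>idx d. d - s \<le> j - i}"
  using assms by (auto simp: idx_s_def idx_def)

lemma QminD:
  assumes "q \<in> Qmin d" and "1 \<le> i" and "i \<le> j" and "j < d"
  shows "q (i, j + 1) \<le> q (i, j)" and "q (i, j) = q (i + 1, j + 1)"
  using assms unfolding Qmin_def by blast+

lemma Qmin_diagonal:
  assumes q: "q \<in> Qmin d" and "1 \<le> i" and "i + k \<le> d"
  shows "q (i, i + k) = q (1, 1 + k)"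
  using assms(2,3)
proof (induction i rule: nat_induct_at_least)
  case (Suc i)
  then have "q (i, i + k) = q (i + 1, i + k + 1)" by (intro QminD(2)[OF q]) simp_all
  with Suc show ?case by simp
qed simp

lemma Qmin_first_row_antitone:
  assumes q: "q \<in> Qmin d" and "1 \<le> a" and "a \<le> b" and "b \<le> d"
  shows "q (1, b) \<le> q (1, a)"
  using assms(3,4)
proof (induction b rule: dec_induct)
  case (step n)
  then have "q (1, n + 1) \<le> q (1, n)" using \<open>1 \<le> a\<close> by (intro QminD(1)[OF q]) simp_all
  with step show ?case by simp
qed simp

lemma Qmin_antitone_in_gap:
  assumes q: "q \<in> Qmin d" and ij: "(i, j) \<in> idx d" and ij': "(i', j') \<in> idx d"
    and gap: "j - i \<le> j' - i'"
  shows "q (i', j') \<le> q (i, j)"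
proof -
  have "q (i, j) = q (1, 1 + (j - i))"
    using Qmin_diagonal[OF q, of i "j - i"] ij by (simp add: idx_def)
  moreover have "q (i', j') = q (1, 1 + (j' - i'))"
    using Qmin_diagonal[OF q, of i' "j' - i'"] ij' by (simp add: idx_def)
  moreover have "q (1, 1 + (j' - i')) \<le> q (1, 1 + (j - i))"
    using gap ij' by (intro Qmin_first_row_antitone[OF q]) (auto simp: idx_def)
  ultimately show ?thesis by simp
qed

text \<open>Every non-empty sublevel set of a vector in Q_min is some I_s: it is
  the set of all indices whose gap is at least the smallest gap it contains.\<close>
lemma Qmin_sublevel_idx_s:
  assumes q: "q \<in> Qmin d"
  shows "{p\<in>idx d. q p < t} \<in> insert {} (idx_s d ` {1..d})"
proof (cases "{p\<in>idx d. q p < t} = {}")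
  case False
  define S where "S = {p\<in>idx d. q p < t}"
  define k where "k = Min ((\<lambda>(i, j). j - i) ` S)"
  have finS: "finite S" using finite_idx by (simp add: S_def)
  have k_le: "k \<le> j - i" if "(i, j) \<in> S" for i j
    using finS that unfolding k_def by (intro Min_le) force+
  have "k \<in> (\<lambda>(i, j). j - i) ` S"
    unfolding k_def using finS False by (intro Min_in) (auto simp: S_def)
  then obtain i0 j0 where ij0: "(i0, j0) \<in> S" "k = j0 - i0" by auto
  then have k_lt: "k < d" by (auto simp: S_def idx_def)
  have "S = idx_s d (d - k)"
  proof
    show "S \<subseteq> idx_s d (d - k)"
      using k_le k_lt by (auto simp: idx_s_eq_gap S_def)
    show "idx_s d (d - k) \<subseteq> S"
    proof
      fix p assume "p \<in> idx_s d (d - k)"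
      then obtain i j where p: "p = (i, j)" "(i, j) \<in> idx d" "k \<le> j - i"
        using k_lt by (auto simp: idx_s_eq_gap)
      have "q (i, j) \<le> q (i0, j0)"
        using Qmin_antitone_in_gap[OF q _ p(2)] ij0 p(3) by (simp add: S_def)
      then show "p \<in> S" using ij0 p by (simp add: S_def)
    qed
  qed
  moreover have "d - k \<in> {1..d}" using k_lt by simp
  ultimately show ?thesis by (simp add: S_def)
qed simp

text \<open>Minus the indicator of I_s lies in Q_min: membership in I_s depends
  only on the gap and is preserved when the gap grows.\<close>
lemma idx_s_level_vec_in_Qmin: "level_vec (idx_s d s) (-1) \<in> Qmin d"
proof -
  have "idx_s d s \<subseteq> idx d" by (auto simp: idx_s_def)
  then show ?thesis
    unfolding Qmin_def using level_vec_in_vecE[of "idx_s d s" d "-1"]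
    by (auto simp: level_vec_def idx_s_def idx_def)
qed

lemma constant_level_vec_in_Qmin: "level_vec (idx d) c \<in> Qmin d"
  unfolding Qmin_def using level_vec_in_vecE[of "idx d" d c]
  by (auto simp: level_vec_def idx_def)

text \<open>Both characterisations are instances of the general description of
  dual cones, with F the sets I_s for Q_min and the admissible sets for
  Q_max.\<close>

theorem proposition2p4:
  fixes d :: nat and v :: "nat \<times> nat \<Rightarrow> real"
  assumes "d \<ge> 1" and "v \<in> vecE d"
  shows "(v \<in> dual_cone d (Qmin d) \<longleftrightarrow>
            (\<Sum>p\<in>idx d. v p) = 0 \<and> (\<forall>s\<in>{1..d}. (\<Sum>p\<in>idx_s d s. v p) \<le> 0))
       \<and> (v \<in> dual_cone d (Qmax d) \<longleftrightarrow>
            (\<Sum>p\<in>idx d. v p) = 0 \<and> (\<forall>J. admissible d J \<longrightarrow> (\<Sum>p\<in>J. v p) \<le> 0))"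
proof
  have "v \<in> dual_cone d (Qmin d) \<longleftrightarrow>
      sum v (idx d) = 0 \<and> (\<forall>J\<in>idx_s d ` {1..d}. sum v J \<le> 0)"
  proof (rule dual_cone_by_sublevel_sets)
    show "\<And>J. J \<in> idx_s d ` {1..d} \<Longrightarrow> J \<subseteq> idx d \<and> level_vec J (-1) \<in> Qmin d"
      using idx_s_level_vec_in_Qmin by (auto simp: idx_s_def)
  qed (use constant_level_vec_in_Qmin Qmin_sublevel_idx_s assms(2) in auto)
  then show "v \<in> dual_cone d (Qmin d) \<longleftrightarrow>
      (\<Sum>p\<in>idx d. v p) = 0 \<and> (\<forall>s\<in>{1..d}. (\<Sum>p\<in>idx_s d s. v p) \<le> 0)"
    by simp
next
  have "v \<in> dual_cone d (Qmax d) \<longleftrightarrow>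
      sum v (idx d) = 0 \<and> (\<forall>J\<in>Collect (admissible d). sum v J \<le> 0)"
  proof (rule dual_cone_by_sublevel_sets)
    show "level_vec (idx d) c \<in> Qmax d" for c
      using constant_level_vec_in_Qmin Qmin_subset_Qmax by blast
  qed (use admissible_level_vec_in_Qmax Qmax_sublevel_admissible assms(2)
       in \<open>auto simp: admissible_def\<close>)
  then show "v \<in> dual_cone d (Qmax d) \<longleftrightarrow>
      (\<Sum>p\<in>idx d. v p) = 0 \<and> (\<forall>J. admissible d J \<longrightarrow> (\<Sum>p\<in>J. v p) \<le> 0)"
    by simp
qed

end
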